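(* For any $F\in\mathscr{F}_2$ and $i\in[F]$: (i) for any $s\in\mathcal{S}$, with $f_i(s)=\gamma(s_1)\cdots\gamma(s_\rho)$ the $\gamma$-decomposition, $|\ddot{\gamma}(s_r)|=|\gamma(s_r)|$ for all $r=1,\dots,\rho$; (ii) $|\ddot{f}_i(s)|=|f_i(s)|$ for all $s\in\mathcal{S}$; (iii) for any $s,s'\in\mathcal{S}$, $f_i(s)\preceq f_i(s')$ if and only if $\ddot{f}_i(s)\preceq\ddot{f}_i(s')$.
   Context: $\mathcal{S}$ is a finite source alphabet with $|\mathcal{S}|\ge 2$ and $\mathcal{C}=\{0,1\}$; $\mathcal{A}^k,\mathcal{A}^{\ast},\mathcal{A}^{+}$ are sequences of length $k$, finite, positive finite length; $\lambda$ empty sequence; $\preceq$ prefix, $\prec$ proper prefix; $\mathrm{suff}(x_1\cdots x_n)=x_2\cdots x_n$; $\bar{c}=1-c$ for $c\in\mathcal{C}$. A code-tuple $F$ with $m\ge1$ code tables consists of maps $f_i:\mathcal{S}\to\mathcal{C}^{\ast}$ and $\tau_i:\mathcal{S}\to\{0,\dots,m-1\}$, $i\in[F]=\{0,\dots,m-1\}$. $f_i^{\ast}(\lambda)=\lambda$, $f_i^{\ast}(\pmb{x})=f_i(x_1)f^{\ast}_{\tau_i(x_1)}(\mathrm{suff}(\pmb{x}))$. For integer $k\ge0$, $\pmb{b}\in\mathcal{C}^{\ast}$: $\mathcal{P}^k_{F,i}(\pmb{b})$ is the set of $\pmb{c}\in\mathcal{C}^k$ such that some $\pmb{x}=x_1\cdots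 x_n\in\mathcal{S}^{+}$ has $f_i^{\ast}(\pmb{x})\succeq\pmb{b}\pmb{c}$ and $f_i(x_1)\succeq\pmb{b}$; $\bar{\mathcal{P}}^k_{F,i}(\pmb{b})$ the same with $f_i(x_1)\succ\pmb{b}$; $\mathcal{P}^k_{F,i}=\mathcal{P}^k_{F,i}(\lambda)$. $F\in\mathscr{F}_{2\text{-}\mathrm{dec}}$ if $\mathcal{P}^2_{F,\tau_i(s)}\cap\bar{\mathcal{P}}^2_{F,i}(f_i(s))=\emptyset$ for all $i,s$, and $\mathcal{P}^2_{F,\tau_i(s)}\cap\mathcal{P}^2_{F,\tau_i(s')}=\emptyset$ whenever $s\ne s'$, $f_i(s)=f_i(s')$. Fix $\mu:\mathcal{S}\to(0,1]$ with $\sum_s\mu(s)=1$; $Q_{i,j}(F)=\sum_{s:\tau_i(s)=j}\mu(s)$; $F\in\mathscr{F}_{\mathrm{reg}}$ if $\pmb{\pi}Q(F)=\pmb{\pi}$, $\sum_i\pi_i=1$ has a unique solution. $\mathscr{F}_2=\{F\in\mathscr{F}_{\mathrm{reg}}\cap\mathscr{F}_{2\text{-}\mathrm{dec}}:|\mathcal{P}^2_{F,i}|\ge3\ \forall i\in[F]\}$ (every such $F$ satisfies $\mathcal{P}^1_{F,i}=\{0,1\}$ for all $i$). $\gamma$-decomposition: for $F\in\mathscr{F}_2$, $i\in[F]$, $s\in\mathcal{S}$, the symbols $s'$ with $f_i(s')\prec f_i(s)$ have pairwise distinct codewords; list them together with $s$ as $s_1,\dots,s_\rho$ with $s_\rho=s$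 and $f_i(s_1)\prec\cdots\prec f_i(s_\rho)$; set $\gamma(s_1)=f_i(s_1)$ and $f_i(s_r)=f_i(s_{r-1})\gamma(s_r)$ for $r\ge2$. The code-tuple $\ddot{F}$: $\ddot{\tau}_i=\tau_i$ and $\ddot{f}_i(s)=\ddot{\gamma}(s_1)\cdots\ddot{\gamma}(s_\rho)$ where, writing $\gamma(s_r)=g_1g_2\cdots g_l$: $\ddot{\gamma}(s_r)=\gamma(s_r)$ if $r=1$ and $|\mathcal{P}^2_{F,i}|=4$; $\ddot{\gamma}(s_r)=1$ if $r=1$, $|\mathcal{P}^2_{F,i}|=3$, $|\gamma(s_r)|=1$; $\ddot{\gamma}(s_r)=01g_3\cdots g_l$ if $r=1$, $|\mathcal{P}^2_{F,i}|=3$, $|\gamma(s_r)|\ge2$, $g_1\bar{g_2}\notin\mathcal{P}^2_{F,i}$; $\ddot{\gamma}(s_r)=1g_2g_3\cdots g_l$ if $r=1$, $|\mathcal{P}^2_{F,i}|=3$, $|\gamma(s_r)|\ge2$, $g_1\bar{g_2}\in\mathcal{P}^2_{F,i}$; $\ddot{\gamma}(s_r)=00g_3\cdots g_l$ if $r\ge2$. *)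

theory Defs
  imports Complex_Main "HOL-Library.Sublist"
begin

text \<open>Code symbols: False = 0, True = 1. A code-tuple F with m tables is given by
  m, f :: nat => 'a => bool list (f i = f_i) and tau :: nat => 'a => nat (tau i = tau_i);
  only indices i < m are relevant.\<close>

definition code_tuple :: "nat \<Rightarrow> (nat \<Rightarrow> 'a \<Rightarrow> nat) \<Rightarrow> bool" where
  "code_tuple m \<tau> \<longleftrightarrow> m \<ge> 1 \<and> (\<forall>i<m. \<forall>s. \<tau> i s < m)"

fun fstar :: "(nat \<Rightarrow> 'a \<Rightarrow> bool list) \<Rightarrow> (nat \<Rightarrow> 'a \<Rightarrow> nat) \<Rightarrow> nat \<Rightarrow> 'a list \<Rightarrow> bool list" where
  "fstar f \<tau> i [] = []"
| "fstar f \<tau> i (x # xs) = f i x @ fstar f \<tau> (\<tau> i x) xs"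

definition Pk :: "(nat \<Rightarrow> 'a \<Rightarrow> bool list) \<Rightarrow> (nat \<Rightarrow> 'a \<Rightarrow> nat) \<Rightarrow> nat \<Rightarrow> nat \<Rightarrow> bool list \<Rightarrow> bool list set" where
  "Pk f \<tau> k i b = {c. length c = k \<and> (\<exists>xs. xs \<noteq> [] \<and> prefix (b @ c) (fstar f \<tau> i xs) \<and> prefix b (f i (hd xs)))}"

definition Pbar :: "(nat \<Rightarrow> 'a \<Rightarrow> bool list) \<Rightarrow> (nat \<Rightarrow> 'a \<Rightarrow> nat) \<Rightarrow> nat \<Rightarrow> nat \<Rightarrow> bool list \<Rightarrow> bool list set" where
  "Pbar f \<tau> k i b = {c. length c = k \<and> (\<exists>xs. xs \<noteq> [] \<and> prefix (b @ c) (fstar f \<tau> i xs) \<and> strict_prefix b (f i (hd xs)))}"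

definition dec2 :: "nat \<Rightarrow> (nat \<Rightarrow> 'a \<Rightarrow> bool list) \<Rightarrow> (nat \<Rightarrow> 'a \<Rightarrow> nat) \<Rightarrow> bool" where
  "dec2 m f \<tau> \<longleftrightarrow> (\<forall>i<m.
      (\<forall>s. Pk f \<tau> 2 (\<tau> i s) [] \<inter> Pbar f \<tau> 2 i (f i s) = {}) \<and>
      (\<forall>s s'. s \<noteq> s' \<and> f i s = f i s' \<longrightarrow> Pk f \<tau> 2 (\<tau> i s) [] \<inter> Pk f \<tau> 2 (\<tau> i s') [] = {}))"

definition valid_mu :: "('a::finite \<Rightarrow> real) \<Rightarrow> bool" where
  "valid_mu \<mu> \<longleftrightarrow> (\<forall>s. 0 < \<mu> s \<and> \<mu> s \<le> 1) \<and> (\<Sum>s\<in>UNIV. \<mu> s) = 1"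

definition Qmat :: "('a::finite \<Rightarrow> real) \<Rightarrow> (nat \<Rightarrow> 'a \<Rightarrow> nat) \<Rightarrow> nat \<Rightarrow> nat \<Rightarrow> real" where
  "Qmat \<mu> \<tau> i j = (\<Sum>s\<in>{s. \<tau> i s = j}. \<mu> s)"

text \<open>Regularity: pi Q = pi, sum pi = 1 has a unique solution pi in R^m
  (vectors represented as nat => real, zero outside [F]).\<close>
definition regular :: "('a::finite \<Rightarrow> real) \<Rightarrow> nat \<Rightarrow> (nat \<Rightarrow> 'a \<Rightarrow> nat) \<Rightarrow> bool" where
  "regular \<mu> m \<tau> \<longleftrightarrow> (\<exists>!\<pi>::nat \<Rightarrow> real. (\<forall>j\<ge>m. \<pi> j = 0) \<and>
      (\<forall>j<m. (\<Sum>i<m. \<pi> i * Qmat \<mu> \<tau> i j) = \<pi> j) \<and> (\<Sum>i<m. \<pi> i) = 1)"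

definition F2 :: "('a::finite \<Rightarrow> real) \<Rightarrow> nat \<Rightarrow> (nat \<Rightarrow> 'a \<Rightarrow> bool list) \<Rightarrow> (nat \<Rightarrow> 'a \<Rightarrow> nat) \<Rightarrow> bool" where
  "F2 \<mu> m f \<tau> \<longleftrightarrow> code_tuple m \<tau> \<and> regular \<mu> m \<tau> \<and> dec2 m f \<tau> \<and>
     (\<forall>i<m. card (Pk f \<tau> 2 i []) \<ge> 3)"

definition gdecomp :: "(nat \<Rightarrow> 'a \<Rightarrow> bool list) \<Rightarrow> nat \<Rightarrow> 'a \<Rightarrow> 'a list \<Rightarrow> bool" where
  "gdecomp f i s ss \<longleftrightarrow> ss \<noteq> [] \<and> last ss = s \<and>
     set ss = insert s {s'. strict_prefix (f i s') (f i s)} \<and>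
     sorted_wrt (\<lambda>a b. strict_prefix (f i a) (f i b)) ss"

text \<open>gamma(s_{r+1}) (0-based index r) from the codeword list ws = [f_i(s_1),...,f_i(s_rho)].\<close>
definition gamma :: "bool list list \<Rightarrow> nat \<Rightarrow> bool list" where
  "gamma ws r = (if r = 0 then ws ! 0 else drop (length (ws ! (r - 1))) (ws ! r))"

text \<open>ddot-gamma (0-based index r). Cases not covered by the paper
  (gamma(s_1) empty, or |P^2| not in {3,4}) default to gamma itself.\<close>
definition ddgamma :: "(nat \<Rightarrow> 'a \<Rightarrow> bool list) \<Rightarrow> (nat \<Rightarrow> 'a \<Rightarrow> nat) \<Rightarrow> nat \<Rightarrow> bool list list \<Rightarrow> nat \<Rightarrow> bool list" where
  "ddgamma f \<tau> i ws r = (let g = gamma ws r in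
     if r = 0 then
       (if card (Pk f \<tau> 2 i []) = 4 then g
        else if card (Pk f \<tau> 2 i []) = 3 then
          (if length g = 1 then [True]
           else if length g \<ge> 2 then
             (if [g ! 0, \<not> (g ! 1)] \<notin> Pk f \<tau> 2 i [] then [False, True] @ drop 2 g
              else True # tl g)
           else g)
        else g)
     else [False, False] @ drop 2 g)"

definition ddf :: "(nat \<Rightarrow> 'a \<Rightarrow> bool list) \<Rightarrow> (nat \<Rightarrow> 'a \<Rightarrow> nat) \<Rightarrow> nat \<Rightarrow> 'a \<Rightarrow> bool list" where
  "ddf f \<tau> i s = (let ws = map (f i) (SOME ss. gdecomp f i s ss) in
     concat (map (ddgamma f \<tau> i ws) [0..<length ws]))"

end

theory Submission
  imports Defs
begin

(* Three consequences of 2-decodability drive the proof: f_i is injective, a codeword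
   properly extending f_i(u) is at least two bits longer, and all such extensions agree on
   their next two bits.  (Otherwise Pbar^2_{F,i}(f_i u) would contain two words, and one of
   them would lie in P^2_{F,tau_i(u)}, which has at least three of the four two-bit words.)
   Hence every segment gamma(s_r) with r >= 2 has length >= 2 and merely has its first two
   bits overwritten by 00, while gamma(s_1) is relabelled by a length-preserving map that
   keeps diverging words diverging; this gives (i) and (ii).  For (iii): if f_i(s) is a
   prefix of f_i(s'), the decomposition of s is an initial part of that of s'; if f_i(s) and
   f_i(s') diverge, their decompositions agree up to the first diverging segments, and
   these still diverge after recoding (for r >= 2 because the overwritten bits coincide). *)

section \<open>Lists and prefix-incomparable words\<close>

lemma sorted_wrt_unique:
  assumes "sorted_wrt R xs" "sorted_wrt R ys" "set xs = set ys"
    and asym: "\<And>a b. R a b \<Longrightarrow> \<not> R b a"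
  shows "xs = ys"
  using assms(1-3)
proof (induction xs arbitrary: ys)
  case Nil
  then show ?case by simp
next
  case (Cons x xs)
  then obtain y ys' where ys: "ys = y # ys'" by (cases ys) auto
  have "x = y"
  proof (rule ccontr)
    assume "x \<noteq> y"
    then have "R x y" "R y x" using Cons.prems ys by auto
    then show False using asym by blast
  qed
  moreover have "x \<notin> set xs" "y \<notin> set ys'"
    using Cons.prems ys asym[of x x] asym[of y y] by auto
  with \<open>x = y\<close> have "set xs = set ys'"
    using Cons.prems ys by auto
  ultimately show ?case using Cons.IH Cons.prems ys by auto
qed

lemma last_sorted_wrt:
  assumes "sorted_wrt R xs" "x \<in> set xs" "\<And>y. y \<in> set xs \<Longrightarrow> y \<noteq> x \<Longrightarrow> R y x"
    and asym: "\<And>a b. R a b \<Longrightarrow> \<not> R b a"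
  shows "last xs = x"
proof (rule ccontr)
  assume ne: "last xs \<noteq> x"
  obtain ys y where xs: "xs = ys @ [y]" using assms(2) by (cases xs rule: rev_cases) auto
  then have "x \<in> set ys" "y \<noteq> x" using assms(2) ne by auto
  then have "R x y" "R y x" using assms(1,3) xs by (auto simp: sorted_wrt_append)
  then show False using asym by blast
qed

lemma sorted_wrt_filter_eq_takeWhile:
  assumes "sorted_wrt R xs" and down: "\<And>x y. R y x \<Longrightarrow> P x \<Longrightarrow> P y"
  shows "filter P xs = takeWhile P xs"
  using assms(1)
proof (induction xs)
  case Nil
  then show ?case by simp
next
  case (Cons x xs)
  show ?case
  proof (cases "P x")
    case True
    then show ?thesis using Cons by simp
  next
    case False
    then have "\<forall>y\<in>set xs. \<not> P y" using Cons.prems down by auto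
    then show ?thesis using False by simp
  qed
qed

lemma takeWhile_split_first:
  assumes "x \<in> set xs" "\<not> P x"
  obtains t rest where "xs = takeWhile P xs @ t # rest" "\<not> P t"
proof -
  obtain t rest where dw: "dropWhile P xs = t # rest"
    using assms by (cases "dropWhile P xs") auto
  then have "\<not> P t" using hd_dropWhile[of P xs] by simp
  moreover have "xs = takeWhile P xs @ t # rest" using takeWhile_dropWhile_id[of P xs] dw by simp
  ultimately show ?thesis using that by blast
qed

lemma parallel_prefixes:
  "prefix a b \<Longrightarrow> prefix a' b' \<Longrightarrow> a \<parallel> a' \<Longrightarrow> b \<parallel> b'"
  by (auto simp: prefix_def intro: parallel_appendI)

lemma parallel_append_left_iff: "p @ x \<parallel> p @ y \<longleftrightarrow> x \<parallel> y"
  by (simp add: parallel_def)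

lemma Cons_parallel_Cons_iff: "a # x \<parallel> b # y \<longleftrightarrow> a \<noteq> b \<or> x \<parallel> y"
  by (auto simp: parallel_def)

lemma parallel_drop_if_take_eq:
  assumes "take k x = take k y" "x \<parallel> y"
  shows "drop k x \<parallel> drop k y"
proof -
  have "take k x @ drop k x \<parallel> take k y @ drop k y"
    using assms(2) by (simp only: append_take_drop_id)
  then show ?thesis using assms(1) by (simp only: parallel_append_left_iff)
qed

lemma parallel_if_diverge:
  assumes "prefix x (p @ b # u)" "\<not> prefix x p" "prefix y (p @ c # v)" "\<not> prefix y p" "b \<noteq> c"
  shows "x \<parallel> y"
proof -
  have "\<exists>z. x = p @ b # z" if hx: "prefix x (p @ b # u)" "\<not> prefix x p" for x b u
  proof -
    obtain zs where "x = p @ zs" "prefix zs (b # u)" "zs \<noteq> []"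
      using hx prefix_append by fastforce
    then show ?thesis by (cases zs) auto
  qed
  then obtain z z' where "x = p @ b # z" "y = p @ c # z'" using assms by blast
  then show ?thesis using assms(5) by (simp add: parallel_append_left_iff Cons_parallel_Cons_iff)
qed

section \<open>Two-bit words and the recoding of the first segment\<close>

lemma two_bit_words: "{c. length c = 2} = {[False,False], [False,True], [True,False], [True,True]}"
  by (auto simp: length_Suc_conv numeral_2_eq_2)

lemma card_two_bit_words: "card {c :: bool list. length c = 2} = 4"
  unfolding two_bit_words by simp

lemma finite_two_bit_words: "finite {c :: bool list. length c = 2}"
  unfolding two_bit_words by simp

lemma two_bit_subset_hits:
  fixes A :: "bool list set"
  assumes "A \<subseteq> {c. length c = 2}" "3 \<le> card A" "length c1 = 2" "length c2 = 2" "c1 \<noteq> c2"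
  shows "c1 \<in> A \<or> c2 \<in> A"
proof (rule ccontr)
  assume "\<not> ?thesis"
  then have "A \<subseteq> {c. length c = 2} - {c1, c2}" using assms(1) by auto
  moreover have "card ({c :: bool list. length c = 2} - {c1, c2}) = 2"
    using assms(3-5) by (simp add: card_Diff_subset card_two_bit_words)
  ultimately have "card A \<le> 2" by (metis card_mono finite_Diff finite_two_bit_words)
  then show False using assms(2) by simp
qed

lemma two_bit_subset_card3:
  fixes P :: "bool list set"
  assumes "P \<subseteq> {c. length c = 2}" "card P = 3"
  obtains b0 b1 where "P = {c. length c = 2} - {[b0, b1]}"
proof -
  have "finite P" using finite_subset[OF assms(1) finite_two_bit_words] .
  then have "card ({c. length c = 2} - P) = 1"
    using assms by (simp add: card_Diff_subset card_two_bit_words)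
  then obtain w where w: "{c. length c = 2} - P = {w}" by (rule card_1_singletonE)
  then have "length w = 2" by blast
  then obtain b0 b1 where "w = [b0, b1]" by (auto simp: length_Suc_conv numeral_2_eq_2)
  moreover have "P = {c. length c = 2} - {w}" using w assms(1) by blast
  ultimately show ?thesis using that by blast
qed

definition recode_first :: "bool list set \<Rightarrow> bool list \<Rightarrow> bool list" where
  "recode_first P g =
     (if card P = 4 then g
      else if card P = 3 then
        (if length g = 1 then [True]
         else if length g \<ge> 2 then
           (if [g ! 0, \<not> (g ! 1)] \<notin> P then [False, True] @ drop 2 g else True # tl g)
         else g)
      else g)"

lemma length_recode_first: "length (recode_first P g) = length g"
  by (auto simp: recode_first_def)

definition admissible :: "bool list set \<Rightarrow> bool list \<Rightarrow> bool" where
  "admissible P g \<longleftrightarrow>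
     (2 \<le> length g \<longrightarrow> take 2 g \<in> P) \<and> (length g = 1 \<longrightarrow> (\<forall>b. [hd g, b] \<in> P))"

lemma recode_first_missing_word:
  assumes P: "P = {c. length c = 2} - {[b0, b1]}" and "admissible P g" "g \<noteq> []"
  shows "recode_first P g = (if hd g = b0 then [False, True] @ drop 2 g else True # tl g)"
    and "hd g = b0 \<Longrightarrow> take 2 g = [b0, \<not> b1]"
proof -
  have "card P = 3" unfolding P by (simp add: card_Diff_subset card_two_bit_words)
  have mem: "w \<in> P \<longleftrightarrow> length w = 2 \<and> w \<noteq> [b0, b1]" for w unfolding P by blast
  obtain a x where g: "g = a # x" using assms(3) by (cases g) auto
  have "recode_first P g = (if hd g = b0 then [False, True] @ drop 2 g else True # tl g)
    \<and> (hd g = b0 \<longrightarrow> take 2 g = [b0, \<not> b1])"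
  proof (cases x)
    case Nil
    then show ?thesis using assms(2) \<open>card P = 3\<close> unfolding g
      by (cases a; cases b0) (auto simp: recode_first_def admissible_def mem)
  next
    case (Cons c y)
    then show ?thesis using assms(2) \<open>card P = 3\<close> unfolding g
      by (cases a; cases c; cases b0; cases b1) (auto simp: recode_first_def admissible_def mem)
  qed
  then show "recode_first P g = (if hd g = b0 then [False, True] @ drop 2 g else True # tl g)"
    and "hd g = b0 \<Longrightarrow> take 2 g = [b0, \<not> b1]" by blast+
qed

lemma recode_first_parallel:
  assumes "P \<subseteq> {c. length c = 2}" "3 \<le> card P" "admissible P g" "admissible P g'" "g \<parallel> g'"
  shows "recode_first P g \<parallel> recode_first P g'"
proof -
  have "card P \<le> 4"
    using card_mono[OF finite_two_bit_words assms(1)] by (simp add: card_two_bit_words)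
  with assms(2) consider "card P = 4" | "card P = 3" by linarith
  then show ?thesis
  proof cases
    case 1
    then show ?thesis using assms(5) by (simp add: recode_first_def)
  next
    case 2
    obtain b0 b1 where P: "P = {c. length c = 2} - {[b0, b1]}"
      by (rule two_bit_subset_card3[OF assms(1) 2])
    obtain a x a' x' where g: "g = a # x" and g': "g' = a' # x'"
      using assms(5) by (cases g; cases g') auto
    have rg: "recode_first P g = (if a = b0 then [False, True] @ drop 2 g else True # x)"
      and rg': "recode_first P g' = (if a' = b0 then [False, True] @ drop 2 g' else True # x')"
      using recode_first_missing_word(1)[OF P assms(3)] recode_first_missing_word(1)[OF P assms(4)]
      by (simp_all add: g g')
    show ?thesis
    proof (cases "a = a'")
      case True
      show ?thesis
      proof (cases "a = b0")
        case True
        then have "take 2 g = take 2 g'"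
          using recode_first_missing_word(2)[OF P assms(3)] recode_first_missing_word(2)[OF P assms(4)]
            \<open>a = a'\<close> by (simp add: g g')
        then have "drop 2 g \<parallel> drop 2 g'"
          using assms(5) by (rule parallel_drop_if_take_eq)
        then show ?thesis
          unfolding rg rg' using True \<open>a = a'\<close> by (simp add: Cons_parallel_Cons_iff)
      next
        case False
        then show ?thesis
          using \<open>a = a'\<close> assms(5) unfolding rg rg' by (simp add: g g' Cons_parallel_Cons_iff)
      qed
    next
      case False
      then show ?thesis unfolding rg rg' by (simp add: Cons_parallel_Cons_iff)
    qed
  qed
qed

section \<open>Recoding a chain of codewords segment by segment\<close>

lemma gamma_append: "r < length ws \<Longrightarrow> gamma (ws @ vs) r = gamma ws r"
  unfolding gamma_def by (cases r) (auto simp: nth_append)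

lemma gamma_snoc: "ws \<noteq> [] \<Longrightarrow> gamma (ws @ [w]) (length ws) = drop (length (last ws)) w"
  unfolding gamma_def by (simp add: nth_append last_conv_nth)

lemma concat_gamma_prefix_chain:
  "sorted_wrt prefix ws \<Longrightarrow> ws \<noteq> [] \<Longrightarrow> concat (map (gamma ws) [0..<length ws]) = last ws"
proof (induction ws rule: rev_induct)
  case Nil
  then show ?case by simp
next
  case (snoc w ws)
  show ?case
  proof (cases "ws = []")
    case True
    then show ?thesis by (simp add: gamma_def)
  next
    case False
    have "map (gamma (ws @ [w])) [0..<length ws] = map (gamma ws) [0..<length ws]"
      by (intro map_cong) (auto simp: gamma_append)
    then have "concat (map (gamma (ws @ [w])) [0..<length (ws @ [w])])
        = concat (map (gamma ws) [0..<length ws]) @ drop (length (last ws)) w"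
      using False by (simp add: gamma_snoc del: map_eq_conv)
    also have "\<dots> = last ws @ drop (length (last ws)) w"
      using snoc False by (simp add: sorted_wrt_append)
    also have "\<dots> = w"
    proof -
      have "prefix (last ws) w" using snoc.prems False by (simp add: sorted_wrt_append)
      then show ?thesis by (auto simp: prefix_def)
    qed
    finally show ?thesis by simp
  qed
qed

lemma ddgamma_append: "r < length ws \<Longrightarrow> ddgamma f \<tau> i (ws @ vs) r = ddgamma f \<tau> i ws r"
  unfolding ddgamma_def by (simp add: gamma_append)

lemma ddgamma_0: "ddgamma f \<tau> i ws 0 = recode_first (Pk f \<tau> 2 i []) (ws ! 0)"
  unfolding ddgamma_def gamma_def recode_first_def Let_def by simp

lemma ddgamma_pos: "0 < r \<Longrightarrow> ddgamma f \<tau> i ws r = [False, False] @ drop 2 (gamma ws r)"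
  unfolding ddgamma_def Let_def by simp

definition ddcat :: "(nat \<Rightarrow> 'a \<Rightarrow> bool list) \<Rightarrow> (nat \<Rightarrow> 'a \<Rightarrow> nat) \<Rightarrow> nat \<Rightarrow> bool list list \<Rightarrow> bool list"
  where "ddcat f \<tau> i ws = concat (map (ddgamma f \<tau> i ws) [0..<length ws])"

lemma ddcat_snoc: "ddcat f \<tau> i (ws @ [w]) = ddcat f \<tau> i ws @ ddgamma f \<tau> i (ws @ [w]) (length ws)"
proof -
  have "map (ddgamma f \<tau> i (ws @ [w])) [0..<length ws] = map (ddgamma f \<tau> i ws) [0..<length ws]"
    by (intro map_cong) (auto simp: ddgamma_append)
  then show ?thesis by (simp add: ddcat_def del: map_eq_conv)
qed

lemma prefix_ddcat:
  assumes "prefix ws vs"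
  shows "prefix (ddcat f \<tau> i ws) (ddcat f \<tau> i vs)"
proof -
  have "prefix (ddcat f \<tau> i ws) (ddcat f \<tau> i (ws @ us))" for us
  proof (induction us rule: rev_induct)
    case Nil
    then show ?case by simp
  next
    case (snoc u us)
    then show ?case using ddcat_snoc[of f \<tau> i "ws @ us" u]
      by (metis append_assoc prefix_order.trans prefixI)
  qed
  then show ?thesis using assms by (auto simp: prefix_def)
qed

lemma length_ddcat:
  assumes "\<And>r. r < length ws \<Longrightarrow> length (ddgamma f \<tau> i ws r) = length (gamma ws r)"
    and "sorted_wrt prefix ws" "ws \<noteq> []"
  shows "length (ddcat f \<tau> i ws) = length (last ws)"
proof -
  have "length (ddcat f \<tau> i ws) = length (concat (map (gamma ws) [0..<length ws]))"
    unfolding ddcat_def length_concat map_map comp_def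
    by (rule arg_cong[where f = sum_list], rule map_cong) (simp_all add: assms(1))
  then show ?thesis using concat_gamma_prefix_chain[OF assms(2,3)] by simp
qed

section \<open>A table of a code-tuple in F_2\<close>

lemma Pk_subset: "Pk f \<tau> 2 j b \<subseteq> {c. length c = 2}"
  unfolding Pk_def by auto

lemma Pbar_subset: "Pbar f \<tau> 2 j b \<subseteq> {c. length c = 2}"
  unfolding Pbar_def by auto

locale F2_table =
  fixes m :: nat and f :: "nat \<Rightarrow> 'a \<Rightarrow> bool list" and \<tau> :: "nat \<Rightarrow> 'a \<Rightarrow> nat" and i :: nat
  assumes code_tuple: "code_tuple m \<tau>" and dec2: "dec2 m f \<tau>"
    and card_Pk: "\<And>j. j < m \<Longrightarrow> 3 \<le> card (Pk f \<tau> 2 j [])"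
    and i_less: "i < m"
begin

lemma tau_less: "\<tau> i s < m"
  using code_tuple i_less unfolding code_tuple_def by auto

lemma run_with_first_bit:
  assumes "j < m"
  obtains ys where "ys \<noteq> []" "prefix [b] (fstar f \<tau> j ys)"
proof -
  have "[b, False] \<in> Pk f \<tau> 2 j [] \<or> [b, True] \<in> Pk f \<tau> 2 j []"
    using two_bit_subset_hits[OF Pk_subset card_Pk[OF assms]] by simp
  then obtain c ys where "ys \<noteq> []" "prefix [b, c] (fstar f \<tau> j ys)"
    unfolding Pk_def by auto
  moreover have "prefix [b] [b, c]" by simp
  ultimately show ?thesis using that prefix_order.trans by blast
qed

lemma Pbar_codeword_unique:
  assumes "c1 \<in> Pbar f \<tau> 2 i (f i u)" "c2 \<in> Pbar f \<tau> 2 i (f i u)"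
  shows "c1 = c2"
proof (rule ccontr)
  assume "c1 \<noteq> c2"
  then have "c1 \<in> Pk f \<tau> 2 (\<tau> i u) [] \<or> c2 \<in> Pk f \<tau> 2 (\<tau> i u) []"
    using two_bit_subset_hits[OF Pk_subset card_Pk[OF tau_less]] assms Pbar_subset by blast
  moreover have "Pk f \<tau> 2 (\<tau> i u) [] \<inter> Pbar f \<tau> 2 i (f i u) = {}"
    using dec2 i_less unfolding dec2_def by simp
  ultimately show False using assms by blast
qed

lemma inj_f: "inj (f i)"
proof (rule injI, rule ccontr)
  fix a b assume "f i a = f i b" "a \<noteq> b"
  then have disjoint: "Pk f \<tau> 2 (\<tau> i a) [] \<inter> Pk f \<tau> 2 (\<tau> i b) [] = {}"
    using dec2 i_less unfolding dec2_def by blast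
  have fin: "finite (Pk f \<tau> 2 j [])" for j
    using Pk_subset finite_two_bit_words by (rule finite_subset)
  have "card (Pk f \<tau> 2 (\<tau> i a) []) + card (Pk f \<tau> 2 (\<tau> i b) []) \<le> card {c :: bool list. length c = 2}"
    unfolding card_Un_disjoint[OF fin fin disjoint, symmetric]
    by (rule card_mono[OF finite_two_bit_words]) (simp add: Pk_subset)
  then show False using card_Pk[OF tau_less, of a] card_Pk[OF tau_less, of b]
    by (simp add: card_two_bit_words)
qed

lemma length_codeword_gap:
  assumes "strict_prefix (f i u) (f i t)"
  shows "length (f i u) + 2 \<le> length (f i t)"
proof (rule ccontr)
  assume "\<not> ?thesis"
  moreover obtain z where z: "f i t = f i u @ z" "z \<noteq> []"
    using assms by (auto simp: strict_prefix_def prefix_def)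
  ultimately have "length z < 2" by simp
  then have "length z = 1" using z(2) by (cases z) auto
  then obtain a where ft: "f i t = f i u @ [a]"
    using z(1) by (auto simp: length_Suc_conv)
  have "[a, b] \<in> Pbar f \<tau> 2 i (f i u)" for b
  proof -
    obtain ys where "ys \<noteq> []" "prefix [b] (fstar f \<tau> (\<tau> i t) ys)"
      using run_with_first_bit[OF tau_less] .
    then have "prefix (f i u @ [a, b]) (fstar f \<tau> i (t # ys))" using ft by simp
    then show ?thesis unfolding Pbar_def using assms by (auto intro!: exI[of _ "t # ys"])
  qed
  then show False using Pbar_codeword_unique[of "[a, False]" u "[a, True]"] by simp
qed

lemma codeword_extensions_agree:
  assumes "strict_prefix (f i u) (f i t)" "strict_prefix (f i u) (f i t')"
  shows "take 2 (drop (length (f i u)) (f i t)) = take 2 (drop (length (f i u)) (f i t'))"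
proof -
  have "take 2 (drop (length (f i u)) (f i x)) \<in> Pbar f \<tau> 2 i (f i u)"
    if ext: "strict_prefix (f i u) (f i x)" for x
  proof -
    obtain z where z: "f i x = f i u @ z" using ext by (meson prefixE strict_prefix_def)
    then have "length (take 2 z) = 2" using length_codeword_gap[OF ext] by simp
    moreover have "prefix (f i u @ take 2 z) (fstar f \<tau> i [x])"
      using z by (simp add: take_is_prefix)
    ultimately show ?thesis unfolding Pbar_def using ext z by (auto intro!: exI[of _ "[x]"])
  qed
  then show ?thesis using assms Pbar_codeword_unique by blast
qed

lemma admissible_codeword: "admissible (Pk f \<tau> 2 i []) (f i t)"
  unfolding admissible_def
proof (intro conjI impI allI)
  assume "2 \<le> length (f i t)"
  then show "take 2 (f i t) \<in> Pk f \<tau> 2 i []"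
    unfolding Pk_def by (auto intro!: exI[of _ "[t]"] simp: take_is_prefix)
next
  fix b assume "length (f i t) = 1"
  then obtain a where ft: "f i t = [a]" by (auto simp: length_Suc_conv)
  obtain ys where "ys \<noteq> []" "prefix [b] (fstar f \<tau> (\<tau> i t) ys)"
    using run_with_first_bit[OF tau_less] .
  then show "[hd (f i t), b] \<in> Pk f \<tau> 2 i []"
    unfolding Pk_def using ft by (auto intro!: exI[of _ "t # ys"])
qed

lemma codeword_prefixes:
  "insert s {x. strict_prefix (f i x) (f i s)} = {x. prefix (f i x) (f i s)}"
  using inj_f by (auto simp: strict_prefix_def inj_eq)

lemma set_gdecomp: "gdecomp f i s ss \<Longrightarrow> set ss = {x. prefix (f i x) (f i s)}"
  unfolding gdecomp_def codeword_prefixes by simp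

lemma sorted_gdecomp: "gdecomp f i s ss \<Longrightarrow> sorted_wrt strict_prefix (map (f i) ss)"
  unfolding gdecomp_def by (simp add: sorted_wrt_map)

lemma gdecomp_exists: "\<exists>ss. gdecomp f i s ss"
proof -
  define A where "A = {x. prefix (f i x) (f i s)}"
  have "A = f i -` set (prefixes (f i s))" unfolding A_def by auto
  then have "finite A" using finite_vimageI[OF _ inj_f] by simp
  have by_length: "prefix (f i a) (f i b)" if "a \<in> A" "b \<in> A" "length (f i a) \<le> length (f i b)" for a b
    using that prefix_length_prefix unfolding A_def by blast
  have "inj_on (\<lambda>x. length (f i x)) A"
  proof (rule inj_onI)
    fix a b assume "a \<in> A" "b \<in> A" "length (f i a) = length (f i b)"
    then have "f i a = f i b" using by_length by (simp add: prefix_order.eq_iff)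
    then show "a = b" using inj_f by (simp add: inj_eq)
  qed
  then interpret folding_insort_key "(\<le>) :: nat \<Rightarrow> nat \<Rightarrow> bool" "(<)" A "\<lambda>x. length (f i x)"
    by unfold_locales
  obtain ss where lengths: "sorted_wrt (<) (map (\<lambda>x. length (f i x)) ss)" and set: "set ss = A"
    using finite_set_strict_sorted[OF subset_refl \<open>finite A\<close>] by blast
  from lengths have sorted: "sorted_wrt (\<lambda>a b. strict_prefix (f i a) (f i b)) ss"
    unfolding sorted_wrt_map
  proof (rule sorted_wrt_mono_rel[rotated])
    fix a b assume "a \<in> set ss" "b \<in> set ss" "length (f i a) < length (f i b)"
    then show "strict_prefix (f i a) (f i b)"
      using by_length[of a b] unfolding set strict_prefix_def by auto
  qed
  have "s \<in> set ss" unfolding set A_def by simp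
  moreover have "last ss = s"
  proof (rule last_sorted_wrt[OF sorted \<open>s \<in> set ss\<close>])
    show "strict_prefix (f i y) (f i s)" if "y \<in> set ss" "y \<noteq> s" for y
      using that inj_f unfolding set A_def by (auto simp: strict_prefix_def inj_eq)
  qed (simp add: prefix_order.less_asym)
  ultimately have "gdecomp f i s ss"
    using sorted set unfolding gdecomp_def A_def codeword_prefixes by auto
  then show ?thesis ..
qed

lemma gdecomp_unique: "gdecomp f i s ss \<Longrightarrow> gdecomp f i s ss' \<Longrightarrow> ss = ss'"
  unfolding gdecomp_def
  by (rule sorted_wrt_unique[where R = "\<lambda>a b. strict_prefix (f i a) (f i b)"])
    (auto dest: prefix_order.less_asym)

lemma ddf_eq_ddcat: "gdecomp f i s ss \<Longrightarrow> ddf f \<tau> i s = ddcat f \<tau> i (map (f i) ss)"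
  using someI_ex[OF gdecomp_exists] gdecomp_unique unfolding ddf_def ddcat_def by auto

lemma length_ddgamma_gdecomp:
  assumes "gdecomp f i s ss" "r < length ss"
  shows "length (ddgamma f \<tau> i (map (f i) ss) r) = length (gamma (map (f i) ss) r)"
proof (cases r)
  case 0
  then show ?thesis by (simp add: ddgamma_0 gamma_def length_recode_first)
next
  case (Suc r')
  then have "strict_prefix (f i (ss ! r')) (f i (ss ! r))"
    using sorted_gdecomp[OF assms(1)] assms(2) by (simp add: sorted_wrt_iff_nth_less)
  then have "2 \<le> length (gamma (map (f i) ss) r)"
    using length_codeword_gap Suc assms(2) by (fastforce simp: gamma_def)
  then show ?thesis using Suc by (simp add: ddgamma_pos)
qed

lemma length_ddf: "length (ddf f \<tau> i s) = length (f i s)"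
proof -
  obtain ss where ss: "gdecomp f i s ss" using gdecomp_exists ..
  have "length (ddcat f \<tau> i (map (f i) ss)) = length (last (map (f i) ss))"
  proof (rule length_ddcat)
    show "sorted_wrt prefix (map (f i) ss)"
      using sorted_gdecomp[OF ss] by (rule sorted_wrt_mono_rel[rotated]) simp
    show "map (f i) ss \<noteq> []" using ss unfolding gdecomp_def by simp
  qed (use length_ddgamma_gdecomp[OF ss] in simp)
  moreover have "last (map (f i) ss) = f i s"
    using ss unfolding gdecomp_def by (simp add: last_map)
  ultimately show ?thesis by (simp add: ddf_eq_ddcat[OF ss])
qed

lemma takeWhile_gdecomp_eq:
  assumes "gdecomp f i s ss" "gdecomp f i s' ss'" "prefix p (f i s)" "prefix p (f i s')"
  shows "takeWhile (\<lambda>x. prefix (f i x) p) ss = takeWhile (\<lambda>x. prefix (f i x) p) ss'"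
proof -
  let ?Q = "\<lambda>x. prefix (f i x) p"
  have take: "takeWhile ?Q xs = filter ?Q xs" and set: "set (filter ?Q xs) = {x. ?Q x}"
    and sorted: "sorted_wrt (\<lambda>a b. strict_prefix (f i a) (f i b)) (filter ?Q xs)"
    if xs: "gdecomp f i t xs" "prefix p (f i t)" for t xs
  proof -
    have sorted_xs: "sorted_wrt (\<lambda>a b. strict_prefix (f i a) (f i b)) xs"
      using xs(1) unfolding gdecomp_def by simp
    have "filter ?Q xs = takeWhile ?Q xs"
      by (rule sorted_wrt_filter_eq_takeWhile[OF sorted_xs])
        (auto dest: prefix_order.less_imp_le intro: prefix_order.trans)
    then show "takeWhile ?Q xs = filter ?Q xs" ..
    show "set (filter ?Q xs) = {x. ?Q x}"
      using set_gdecomp[OF xs(1)] xs(2) by (auto intro: prefix_order.trans)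
    show "sorted_wrt (\<lambda>a b. strict_prefix (f i a) (f i b)) (filter ?Q xs)"
      using sorted_xs by (rule sorted_wrt_filter)
  qed
  have "filter ?Q ss = filter ?Q ss'"
    using sorted[OF assms(1,3)] sorted[OF assms(2,4)] set[OF assms(1,3)] set[OF assms(2,4)]
    by (intro sorted_wrt_unique[where R = "\<lambda>a b. strict_prefix (f i a) (f i b)"])
      (auto dest: prefix_order.less_asym)
  then show ?thesis using take[OF assms(1,3)] take[OF assms(2,4)] by simp
qed

lemma prefix_ddf_if_prefix:
  assumes "prefix (f i s) (f i s')"
  shows "prefix (ddf f \<tau> i s) (ddf f \<tau> i s')"
proof -
  obtain ss ss' where ss: "gdecomp f i s ss" and ss': "gdecomp f i s' ss'"
    using gdecomp_exists by blast
  let ?Q = "\<lambda>x. prefix (f i x) (f i s)"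
  have "takeWhile ?Q ss = ss" using set_gdecomp[OF ss] by simp
  then have "ss = takeWhile ?Q ss'" using takeWhile_gdecomp_eq[OF ss ss' _ assms] by simp
  then have "prefix ss ss'" by (simp add: takeWhile_is_prefix)
  then show ?thesis
    unfolding ddf_eq_ddcat[OF ss] ddf_eq_ddcat[OF ss'] by (intro prefix_ddcat map_mono_prefix)
qed

lemma ddgamma_snoc_parallel:
  assumes "\<forall>u\<in>set us. strict_prefix (f i u) (f i t)" "\<forall>u\<in>set us. strict_prefix (f i u) (f i t')"
    and "f i t \<parallel> f i t'"
  shows "ddgamma f \<tau> i (map (f i) us @ [f i t]) (length us)
    \<parallel> ddgamma f \<tau> i (map (f i) us @ [f i t']) (length us)"
proof (cases "us = []")
  case True
  then show ?thesis
    using recode_first_parallel[OF Pk_subset card_Pk[OF i_less] admissible_codeword admissible_codeword assms(3)]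
    by (simp add: ddgamma_0)
next
  case False
  define n where "n = length (f i (last us))"
  have dd: "ddgamma f \<tau> i (map (f i) us @ [f i x]) (length us) = [False, False] @ drop 2 (drop n (f i x))" for x
    using gamma_snoc[of "map (f i) us" "f i x"] False by (simp add: ddgamma_pos last_map n_def)
  have sp: "strict_prefix (f i (last us)) (f i t)" "strict_prefix (f i (last us)) (f i t')"
    using assms(1,2) False by simp_all
  then obtain z z' where "f i t = f i (last us) @ z" "f i t' = f i (last us) @ z'"
    by (meson prefixE strict_prefix_def)
  then have "drop n (f i t) \<parallel> drop n (f i t')"
    using assms(3) by (simp add: n_def parallel_append_left_iff)
  moreover have "take 2 (drop n (f i t)) = take 2 (drop n (f i t'))"
    using codeword_extensions_agree[OF sp] unfolding n_def .
  ultimately have "drop 2 (drop n (f i t)) \<parallel> drop 2 (drop n (f i t'))"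
    using parallel_drop_if_take_eq[of 2 "drop n (f i t)" "drop n (f i t')"] by blast
  then show ?thesis unfolding dd by (simp only: parallel_append_left_iff)
qed

lemma ddf_parallel:
  assumes "f i s \<parallel> f i s'"
  shows "ddf f \<tau> i s \<parallel> ddf f \<tau> i s'"
proof -
  obtain p b bs c cs where "b \<noteq> c" and s: "f i s = p @ b # bs" and s': "f i s' = p @ c # cs"
    using parallel_decomp[OF assms] by blast
  obtain ss ss' where ss: "gdecomp f i s ss" and ss': "gdecomp f i s' ss'"
    using gdecomp_exists by blast
  let ?Q = "\<lambda>x. prefix (f i x) p"
  define us where "us = takeWhile ?Q ss"
  have p: "prefix p (f i s)" "prefix p (f i s')" using s s' by simp_all
  have "s \<in> set ss" "s' \<in> set ss'" using set_gdecomp[OF ss] set_gdecomp[OF ss'] by simp_all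
  have "\<not> ?Q s" "\<not> ?Q s'" using s s' by auto
  obtain t rest where t: "ss = us @ t # rest" "\<not> ?Q t"
    unfolding us_def by (rule takeWhile_split_first[where P = ?Q, OF \<open>s \<in> set ss\<close> \<open>\<not> ?Q s\<close>])
  obtain t' rest' where t': "ss' = us @ t' # rest'" "\<not> ?Q t'"
    unfolding us_def takeWhile_gdecomp_eq[OF ss ss' p]
    by (rule takeWhile_split_first[where P = ?Q, OF \<open>s' \<in> set ss'\<close> \<open>\<not> ?Q s'\<close>])
  have "prefix (f i t) (f i s)" "prefix (f i t') (f i s')"
    using set_gdecomp[OF ss] set_gdecomp[OF ss'] t(1) t'(1) by auto
  then have "f i t \<parallel> f i t'"
    unfolding s s' by (rule parallel_if_diverge[OF _ t(2) _ t'(2) \<open>b \<noteq> c\<close>])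
  moreover have "\<forall>u\<in>set us. strict_prefix (f i u) (f i t)" "\<forall>u\<in>set us. strict_prefix (f i u) (f i t')"
    using sorted_gdecomp[OF ss] sorted_gdecomp[OF ss'] t t' by (simp_all add: sorted_wrt_append)
  ultimately have "ddcat f \<tau> i (map (f i) (us @ [t])) \<parallel> ddcat f \<tau> i (map (f i) (us @ [t']))"
    using ddgamma_snoc_parallel by (simp add: ddcat_snoc parallel_append_left_iff)
  moreover have "prefix (ddcat f \<tau> i (map (f i) (us @ [t]))) (ddf f \<tau> i s)"
    and "prefix (ddcat f \<tau> i (map (f i) (us @ [t']))) (ddf f \<tau> i s')"
    unfolding ddf_eq_ddcat[OF ss] ddf_eq_ddcat[OF ss'] t t'
    by (intro prefix_ddcat map_mono_prefix; simp)+
  ultimately show ?thesis using parallel_prefixes by blast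
qed

lemma prefix_if_prefix_ddf:
  assumes "prefix (ddf f \<tau> i s) (ddf f \<tau> i s')"
  shows "prefix (f i s) (f i s')"
proof (cases "f i s" "f i s'" rule: prefix_cases)
  case 1
  then show ?thesis .
next
  case 2
  then have "length (ddf f \<tau> i s') < length (ddf f \<tau> i s)"
    by (simp add: length_ddf prefix_length_less)
  then show ?thesis using assms prefix_length_le by fastforce
next
  case 3
  then show ?thesis using assms ddf_parallel parallelD1 by blast
qed

end

theorem lemma25:
  fixes \<mu> :: "'a::finite \<Rightarrow> real" and m :: nat
    and f :: "nat \<Rightarrow> 'a \<Rightarrow> bool list" and \<tau> :: "nat \<Rightarrow> 'a \<Rightarrow> nat" and i :: nat
  assumes "card (UNIV :: 'a set) \<ge> 2" and "valid_mu \<mu>" and "F2 \<mu> m f \<tau>" and "i < m"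
  shows "(\<forall>s ss. gdecomp f i s ss \<longrightarrow>
            (\<forall>r<length ss. length (ddgamma f \<tau> i (map (f i) ss) r) = length (gamma (map (f i) ss) r)))
       \<and> (\<forall>s. length (ddf f \<tau> i s) = length (f i s))
       \<and> (\<forall>s s'. prefix (f i s) (f i s') \<longleftrightarrow> prefix (ddf f \<tau> i s) (ddf f \<tau> i s'))"
proof -
  interpret F2_table m f \<tau> i
    using assms(3,4) by unfold_locales (simp_all add: F2_def)
  show ?thesis
    using length_ddgamma_gdecomp length_ddf prefix_ddf_if_prefix prefix_if_prefix_ddf by blast
qed

end
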